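(* Let $q$ be a prime power with $q\equiv 1\pmod 3$, let $n$ be a positive integer and $a\in\mathbb{F}_q$. Then $f(x)=x^n\big(x^{\frac{q-1}{3}}+a\big)$ is a permutation polynomial of $\mathbb{F}_q$ if and only if all of the following hold: (a) $\gcd\big(n,\frac{q-1}{3}\big)=1$; (b) $a\notin\{-1,-\xi,-\xi^2\}$; (c) $\eta\big(\frac{\xi+a}{1+a}\big)\neq\delta^{2n}$; (d) $\eta\big(\frac{1+a}{\xi^2+a}\big)\neq\delta^{2n}$; (e) $\eta\big(\frac{\xi^2+a}{\xi+a}\big)\neq\delta^{2n}$.
   Context: A polynomial is a permutation polynomial of $\mathbb{F}_q$ if it induces a bijection of $\mathbb{F}_q$. Let $q\equiv 1\pmod 3$, let $\xi\in\mathbb{F}_q$ be a fixed cube root of unity with $\xi\neq 1$, and let $\delta\in\mathbb{C}$ be a fixed cube root of unity with $\delta\neq1$. Let $\eta:\mathbb{F}_q\to\mathbb{C}$ be the cubic multiplicative character defined by $\eta(0)=0$ and, for $c\in\mathbb{F}_q^*$ and integers $j$, $\eta(c)=\delta^j$ if and only if $c^{\frac{q-1}{3}}=\xi^j$. We write $\eta^2(c)$ for $\eta(c)^2$. *)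

theory Defs
  imports Complex_Main "HOL-Computational_Algebra.Polynomial"
begin

definition permutation_polynomial :: "'a::{field,finite} poly \<Rightarrow> bool" where
  "permutation_polynomial p \<longleftrightarrow> bij (poly p)"

text \<open>The cubic multiplicative character eta, relative to the fixed cube roots
  of unity xi (in the field) and delta (in the complex numbers):
  eta 0 = 0, and for c nonzero, eta c = delta ^ j iff c ^ ((q-1)/3) = xi ^ j.\<close>
definition cubic_char :: "'a::{field,finite} \<Rightarrow> complex \<Rightarrow> 'a \<Rightarrow> complex" where
  "cubic_char xi delta c =
     (if c = 0 then 0
      else delta ^ (SOME j::nat. c ^ ((card (UNIV::'a set) - 1) div 3) = xi ^ j))"

end

theory Submission
  imports Defs
begin

text \<open>Put \<open>m = (q - 1) / 3\<close> and \<open>h u = u + a\<close>, so \<open>f x = x^n h(x^m)\<close>. On \<open>\<F>\<^sub>q\<^sup>*\<close> the map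
  \<open>x \<mapsto> x^m\<close> is onto the cube roots of unity \<open>\<mu>\<^sub>3\<close> with fibres of size \<open>m\<close>, and
  \<open>f(x)^m = g(x^m)\<close> for \<open>g u = u^n h(u)^m\<close>. Counting the image of \<open>f\<close> through these fibres, and
  Bezout for the converse, shows that \<open>f\<close> permutes \<open>\<F>\<^sub>q\<close> iff \<open>gcd(n, m) = 1\<close>, \<open>h\<close> has no zero
  on \<open>\<mu>\<^sub>3\<close> and \<open>g\<close> is injective on \<open>\<mu>\<^sub>3 = {1, \<xi>, \<xi>\<^sup>2}\<close>. Since \<open>\<eta>(c) = \<delta>\<^sup>k\<close> iff \<open>c^m = \<xi>\<^sup>k\<close>,
  the three inequalities \<open>g(\<xi> u) \<noteq> g(u)\<close> are exactly conditions (c)--(e).\<close>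

lemma permutation_polynomial_iff_inj: "permutation_polynomial p \<longleftrightarrow> inj (poly p)"
  unfolding permutation_polynomial_def bij_def by (metis finite finite_UNIV_inj_surj)

lemma card_power_eq_le:
  fixes c :: "'a::field"
  assumes "k \<ge> 1"
  shows "card {x. x ^ k = c} \<le> k"
proof -
  have deg: "degree (monom 1 k + [:-c:]) = k"
    using assms by (subst degree_add_eq_left) (auto simp: degree_monom_eq)
  then have "monom 1 k + [:-c:] \<noteq> 0" using assms by auto
  from card_poly_roots_bound[OF this] deg show ?thesis by (simp add: poly_monom)
qed

lemma card_le_card_image_mult:
  assumes "finite A" "\<And>c. card {x \<in> A. g x = c} \<le> k"
  shows "card A \<le> card (g ` A) * k"
proof -
  have "A = (\<Union>c\<in>g ` A. {x \<in> A. g x = c})" by blast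
  then have "card A \<le> (\<Sum>c\<in>g ` A. card {x \<in> A. g x = c})"
    by (metis card_UN_le assms(1) finite_imageI)
  also have "\<dots> \<le> (\<Sum>c\<in>g ` A. k)" using assms(2) by (intro sum_mono)
  finally show ?thesis by simp
qed

lemma card_UNIV_field_ge_2: "card (UNIV :: 'a::{field,finite} set) \<ge> 2"
  using card_mono[of UNIV "{0::'a, 1}"] by simp

lemma power_card_minus_one_eq_1:
  fixes x :: "'a::{field,finite}"
  assumes "x \<noteq> 0"
  shows "x ^ (card (UNIV :: 'a set) - 1) = 1"
proof -
  have "(\<Prod>y\<in>-{0::'a}. y) = (\<Prod>y\<in>-{0}. x * y)"
    by (rule prod.reindex_bij_witness[of _ "\<lambda>y. y / x" "\<lambda>y. x * y", symmetric])
      (use assms in auto)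
  also have "\<dots> = x ^ card (- {0::'a}) * (\<Prod>y\<in>-{0}. y)"
    by (simp add: prod.distrib)
  finally have "x ^ card (- {0::'a}) = 1" by simp
  moreover have "card (- {0::'a}) = card (UNIV :: 'a set) - 1"
    by (simp add: Compl_eq_Diff_UNIV card_Diff_singleton)
  ultimately show ?thesis by simp
qed

lemma power_image_eq_roots_of_unity:
  fixes m d :: nat
  assumes "m * d = card (UNIV :: 'a::{field,finite} set) - 1"
  shows "(\<lambda>x. x ^ m) ` (- {0::'a}) = {u. u ^ d = 1}"
    and "card {u::'a. u ^ d = 1} = d"
proof -
  let ?P = "(\<lambda>x::'a. x ^ m) ` (- {0})"
  have card_units: "card (- {0::'a}) = m * d"
    using assms by (simp add: Compl_eq_Diff_UNIV card_Diff_singleton)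
  have "0 < m * d" using assms card_UNIV_field_ge_2[where 'a='a] by simp
  then have m: "m \<ge> 1" and d: "d \<ge> 1" by auto
  have sub: "?P \<subseteq> {u. u ^ d = 1}"
    using power_card_minus_one_eq_1 assms by (auto simp: power_mult[symmetric])
  have "m * d \<le> card ?P * m"
    unfolding card_units[symmetric]
    by (rule card_le_card_image_mult) (auto intro: order_trans[OF card_mono card_power_eq_le[OF m]])
  then have "d \<le> card ?P" using m by simp
  moreover have "card {u::'a. u ^ d = 1} \<le> d" by (rule card_power_eq_le[OF d])
  moreover have "card ?P \<le> card {u::'a. u ^ d = 1}" using sub by (intro card_mono) auto
  ultimately show "?P = {u. u ^ d = 1}" "card {u::'a. u ^ d = 1} = d"
    using card_subset_eq[OF _ sub] by auto
qed

lemma inj_power_mult_imp_gcd_eq_1: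
  fixes h :: "'a::{field,finite} \<Rightarrow> 'a"
  assumes "m dvd card (UNIV :: 'a set) - 1" and inj: "inj (\<lambda>x. x ^ n * h (x ^ m))"
  shows "gcd n m = 1"
proof (rule ccontr)
  let ?g = "gcd n m"
  assume "?g \<noteq> 1"
  have "?g dvd card (UNIV :: 'a set) - 1" using assms(1) by (rule dvd_trans[OF gcd_dvd2])
  then obtain k where k: "k * ?g = card (UNIV :: 'a set) - 1" by (metis dvdE mult.commute)
  then have "0 < k * ?g" using card_UNIV_field_ge_2[where 'a='a] by linarith
  then have "?g \<noteq> 0" by simp
  with \<open>?g \<noteq> 1\<close> have "card {u::'a. u ^ ?g = 1} > 1"
    using power_image_eq_roots_of_unity(2)[OF k] by linarith
  moreover have "card {1::'a} = 1" by simp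
  ultimately have "\<not> {u::'a. u ^ ?g = 1} \<subseteq> {1}" by (metis card_mono finite.intros not_le)
  then obtain z :: 'a where z: "z ^ ?g = 1" "z \<noteq> 1" by blast
  have "z ^ n = 1" "z ^ m = 1"
    using z(1) by (metis dvd_def gcd_dvd1 gcd_dvd2 power_mult power_one)+
  then have "(\<lambda>x. x ^ n * h (x ^ m)) z = (\<lambda>x. x ^ n * h (x ^ m)) 1" by simp
  with z(2) show False using injD[OF inj] by blast
qed

lemma inj_power_mult_imp_nonzero:
  fixes h :: "'a::{field,finite} \<Rightarrow> 'a"
  assumes "m * d = card (UNIV :: 'a set) - 1" "n > 0" and inj: "inj (\<lambda>x. x ^ n * h (x ^ m))"
    and "u ^ d = 1"
  shows "h u \<noteq> 0"
proof
  assume "h u = 0"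
  obtain x :: 'a where "x \<noteq> 0" "u = x ^ m"
    using power_image_eq_roots_of_unity(1)[OF assms(1)] \<open>u ^ d = 1\<close> by blast
  with \<open>h u = 0\<close> \<open>n > 0\<close> have "(\<lambda>x. x ^ n * h (x ^ m)) x = (\<lambda>x. x ^ n * h (x ^ m)) 0" by simp
  with \<open>x \<noteq> 0\<close> show False using injD[OF inj] by blast
qed

lemma inj_power_mult_imp_inj_on:
  fixes h :: "'a::{field,finite} \<Rightarrow> 'a"
  assumes md: "m * d = card (UNIV :: 'a set) - 1" and inj: "inj (\<lambda>x. x ^ n * h (x ^ m))"
  shows "inj_on (\<lambda>u. u ^ n * h u ^ m) {u. u ^ d = 1}"
proof (rule ccontr)
  define f where "f = (\<lambda>x::'a. x ^ n * h (x ^ m))"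
  define G where "G = (\<lambda>u::'a. u ^ n * h u ^ m)"
  let ?\<mu> = "{u::'a. u ^ d = 1}"
  assume "\<not> inj_on G ?\<mu>"
  then have "card (G ` ?\<mu>) < d"
    using power_image_eq_roots_of_unity(2)[OF md] card_image_le[of ?\<mu> G]
    by (metis finite inj_on_iff_eq_card order_le_neq_trans)
  have m: "m \<ge> 1" using md card_UNIV_field_ge_2[where 'a='a] by (cases m) auto
  have powers_of_f: "(\<lambda>y. y ^ m) ` f ` (- {0}) = G ` ?\<mu>"
    unfolding power_image_eq_roots_of_unity(1)[OF md, symmetric] image_image f_def G_def
    by (simp add: power_mult_distrib power_mult[symmetric] mult.commute)
  have "m * d = card (f ` (- {0}))"
    using md inj unfolding f_def
    by (simp add: card_image inj_on_subset Compl_eq_Diff_UNIV card_Diff_singleton)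
  also have "\<dots> \<le> card (G ` ?\<mu>) * m"
    unfolding powers_of_f[symmetric]
    by (rule card_le_card_image_mult) (auto intro: order_trans[OF card_mono card_power_eq_le[OF m]])
  finally show False using \<open>card (G ` ?\<mu>) < d\<close> m by simp
qed

lemma inj_power_mult_if:
  fixes h :: "'a::{field,finite} \<Rightarrow> 'a"
  assumes md: "m * d = card (UNIV :: 'a set) - 1" and "n > 0" "gcd n m = 1"
    and nonzero: "\<And>u. u ^ d = 1 \<Longrightarrow> h u \<noteq> 0"
    and inj_on: "inj_on (\<lambda>u. u ^ n * h u ^ m) {u. u ^ d = 1}"
  shows "inj (\<lambda>x. x ^ n * h (x ^ m))"
proof (rule injI)
  fix x y :: 'a
  assume eq: "x ^ n * h (x ^ m) = y ^ n * h (y ^ m)"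
  have root: "(z ^ m) ^ d = 1" if "z \<noteq> 0" for z :: 'a
  proof -
    have "z ^ m \<in> (\<lambda>x. x ^ m) ` (- {0})" using that by blast
    then show ?thesis unfolding power_image_eq_roots_of_unity(1)[OF md] by simp
  qed
  have h_nonzero: "h (z ^ m) \<noteq> 0" if "z \<noteq> 0" for z :: 'a
    using nonzero[OF root[OF that]] .
  have value_eq_0_iff: "z ^ n * h (z ^ m) = 0 \<longleftrightarrow> z = 0" for z :: 'a
    using h_nonzero[of z] \<open>n > 0\<close> by (cases "z = 0") simp_all
  show "x = y"
  proof (cases "x = 0 \<or> y = 0")
    case True
    then show ?thesis using eq value_eq_0_iff[of x] value_eq_0_iff[of y] by auto
  next
    case False
    have "(x ^ m) ^ n * h (x ^ m) ^ m = (y ^ m) ^ n * h (y ^ m) ^ m"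
      using arg_cong[OF eq, of "\<lambda>z. z ^ m"]
      by (simp add: power_mult_distrib power_mult[symmetric] mult.commute)
    then have xm: "x ^ m = y ^ m"
      by (rule inj_onD[OF inj_on]) (use root False in simp_all)
    with eq h_nonzero[of x] False have xn: "x ^ n = y ^ n" by simp
    have ratio: "(x / y) ^ n = 1" "(x / y) ^ m = 1"
      using xn xm False by (simp_all add: power_divide)
    obtain i j where "n * i = m * j + 1"
      using bezout_nat[of n m] \<open>n > 0\<close> \<open>gcd n m = 1\<close> by auto
    then have "x / y = ((x / y) ^ n) ^ i / ((x / y) ^ m) ^ j"
      using False by (simp add: power_mult[symmetric] power_add)
    then show "x = y" using ratio False by simp
  qed
qed

lemma inj_power_mult_iff:
  fixes h :: "'a::{field,finite} \<Rightarrow> 'a"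
  assumes "m * d = card (UNIV :: 'a set) - 1" "n > 0"
  shows "inj (\<lambda>x. x ^ n * h (x ^ m)) \<longleftrightarrow>
           gcd n m = 1 \<and> (\<forall>u. u ^ d = 1 \<longrightarrow> h u \<noteq> 0)
           \<and> inj_on (\<lambda>u. u ^ n * h u ^ m) {u. u ^ d = 1}"
proof (intro iffI conjI allI impI)
  assume inj: "inj (\<lambda>x. x ^ n * h (x ^ m))"
  have "m dvd card (UNIV :: 'a set) - 1" using assms(1) by (metis dvd_triv_left)
  then show "gcd n m = 1" using inj by (rule inj_power_mult_imp_gcd_eq_1)
  show "h u \<noteq> 0" if "u ^ d = 1" for u
    using inj_power_mult_imp_nonzero[OF assms inj that] .
  show "inj_on (\<lambda>u. u ^ n * h u ^ m) {u. u ^ d = 1}"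
    using inj_power_mult_imp_inj_on[OF assms(1) inj] .
next
  assume "gcd n m = 1 \<and> (\<forall>u. u ^ d = 1 \<longrightarrow> h u \<noteq> 0)
            \<and> inj_on (\<lambda>u. u ^ n * h u ^ m) {u. u ^ d = 1}"
  then show "inj (\<lambda>x. x ^ n * h (x ^ m))"
    by (intro inj_power_mult_if[OF assms]) auto
qed

lemma cube_root_of_unity_power_eq_iff:
  fixes w :: "'a::field"
  assumes "w ^ 3 = 1" "w \<noteq> 1"
  shows "w ^ i = w ^ j \<longleftrightarrow> i mod 3 = j mod 3"
proof -
  have reduce: "w ^ k = w ^ (k mod 3)" for k
    by (metis assms(1) div_mult_mod_eq mult.commute power_add power_mult power_one mult_1)
  have "w \<noteq> - 1"
  proof
    assume "w = - 1"
    with assms(1) have "w = 1" by (simp add: power3_eq_cube)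
    with assms(2) show False ..
  qed
  then have "(w - 1) * (w + 1) \<noteq> 0" "(w - 1) * w \<noteq> 0"
    using assms by (auto simp: add_eq_0_iff equation_minus_iff)
  then have "w ^ 2 \<noteq> 1" "w ^ 2 \<noteq> w" "w \<noteq> 1"
    using assms(2) by (auto simp: algebra_simps power2_eq_square)
  moreover have "k mod 3 = 0 \<or> k mod 3 = 1 \<or> k mod 3 = 2" for k :: nat by presburger
  ultimately have "w ^ (i mod 3) = w ^ (j mod 3) \<longleftrightarrow> i mod 3 = j mod 3"
    by (metis power_0 power_one_right)
  then show ?thesis by (simp only: reduce[of i] reduce[of j])
qed

lemma cube_roots_of_unity_eq:
  fixes xi :: "'a::field"
  assumes "xi ^ 3 = 1" "xi \<noteq> 1"
  shows "{u. u ^ 3 = 1} = {1, xi, xi ^ 2}"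
proof -
  have "(xi - 1) * (xi ^ 2 + xi + 1) = xi ^ 3 - 1"
    by (simp add: algebra_simps power2_eq_square power3_eq_cube)
  with assms have sum: "xi ^ 2 + xi + 1 = 0" by simp
  have "(t - 1) * (t - xi) * (t - xi ^ 2) = t ^ 3 - 1 - (xi ^ 2 + xi + 1) * (t ^ 2 - t)" for t
    using assms(1) by (simp add: algebra_simps power2_eq_square power3_eq_cube)
  then have "t ^ 3 = 1 \<longleftrightarrow> (t - 1) * (t - xi) * (t - xi ^ 2) = 0" for t
    using sum by simp
  moreover have "(xi ^ 2) ^ 3 = 1"
    using assms(1) by (metis power_mult mult.commute power_one)
  ultimately have "t ^ 3 = 1 \<longleftrightarrow> t \<in> {1, xi, xi ^ 2}" for t
    by auto
  then show ?thesis by blast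
qed

lemma cubic_char_eq_power_iff:
  fixes xi c :: "'a::{field,finite}" and delta :: complex
  assumes q_mod: "card (UNIV :: 'a set) mod 3 = 1"
    and xi: "xi ^ 3 = 1" "xi \<noteq> 1" and delta: "delta ^ 3 = 1" "delta \<noteq> 1"
    and "c \<noteq> 0"
  shows "cubic_char xi delta c = delta ^ k
           \<longleftrightarrow> c ^ ((card (UNIV :: 'a set) - 1) div 3) = xi ^ k"
proof -
  let ?m = "(card (UNIV :: 'a set) - 1) div 3"
  define J where "J = (SOME j. c ^ ?m = xi ^ j)"
  have m3: "?m * 3 = card (UNIV :: 'a set) - 1" using q_mod by presburger
  have "c ^ ?m \<in> (\<lambda>x. x ^ ?m) ` (- {0})" using \<open>c \<noteq> 0\<close> by blast
  also have "(\<lambda>x. x ^ ?m) ` (- {0}) = {1, xi, xi ^ 2}"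
    unfolding power_image_eq_roots_of_unity(1)[OF m3] cube_roots_of_unity_eq[OF xi] ..
  finally have "\<exists>j. c ^ ?m = xi ^ j" by (metis empty_iff insertE power_0 power_one_right)
  then have J: "c ^ ?m = xi ^ J" unfolding J_def by (rule someI_ex)
  have "cubic_char xi delta c = delta ^ J"
    using \<open>c \<noteq> 0\<close> unfolding cubic_char_def J_def by (rule if_not_P)
  then show ?thesis
    by (simp only: J cube_root_of_unity_power_eq_iff[OF xi] cube_root_of_unity_power_eq_iff[OF delta])
qed

lemma power_ratio_eq_iff:
  fixes xi u a :: "'a::field"
  assumes "xi ^ 3 = 1" "u \<noteq> 0" "u + a \<noteq> 0"
  shows "((xi * u + a) / (u + a)) ^ m = xi ^ (2 * n)
           \<longleftrightarrow> (xi * u) ^ n * (xi * u + a) ^ m = u ^ n * (u + a) ^ m"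
proof -
  have "xi \<noteq> 0" using assms(1) by auto
  have "((xi * u + a) / (u + a)) ^ m = xi ^ (2 * n)
          \<longleftrightarrow> (xi * u) ^ n * (xi * u + a) ^ m = (xi * u) ^ n * xi ^ (2 * n) * (u + a) ^ m"
    using assms \<open>xi \<noteq> 0\<close> by (simp add: power_divide divide_eq_eq)
  also have "(xi * u) ^ n * xi ^ (2 * n) = (xi ^ 3) ^ n * u ^ n"
    by (simp add: power_mult_distrib power_add[symmetric] power_mult[symmetric] mult.commute)
  finally show ?thesis using assms(1) by simp
qed

lemma cubic_char_ratio_eq_iff:
  fixes xi u a :: "'a::{field,finite}" and delta :: complex
  assumes q_mod: "card (UNIV :: 'a set) mod 3 = 1"
    and xi: "xi ^ 3 = 1" "xi \<noteq> 1" and delta: "delta ^ 3 = 1" "delta \<noteq> 1"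
    and "u \<noteq> 0" "u + a \<noteq> 0" "xi * u + a \<noteq> 0"
  shows "cubic_char xi delta ((xi * u + a) / (u + a)) = delta ^ (2 * n)
           \<longleftrightarrow> (xi * u) ^ n * (xi * u + a) ^ ((card (UNIV :: 'a set) - 1) div 3)
               = u ^ n * (u + a) ^ ((card (UNIV :: 'a set) - 1) div 3)"
proof -
  have ratio_nonzero: "(xi * u + a) / (u + a) \<noteq> 0" using assms(7,8) by simp
  show ?thesis
    unfolding cubic_char_eq_power_iff[OF q_mod xi delta ratio_nonzero]
    by (rule power_ratio_eq_iff[OF xi(1) assms(6,7)])
qed

theorem lemma4p1:
  fixes xi a :: "'a::{field,finite}" and delta :: complex and n :: nat
  assumes q_mod: "card (UNIV::'a set) mod 3 = 1"
    and xi: "xi ^ 3 = 1" "xi \<noteq> 1"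
    and delta: "delta ^ 3 = 1" "delta \<noteq> 1"
    and n_pos: "n > 0"
  shows "permutation_polynomial
           (monom 1 n * (monom 1 ((card (UNIV::'a set) - 1) div 3) + [:a:]))
         \<longleftrightarrow>
           gcd n ((card (UNIV::'a set) - 1) div 3) = 1
         \<and> a \<notin> {- 1, - xi, - (xi ^ 2)}
         \<and> cubic_char xi delta ((xi + a) / (1 + a)) \<noteq> delta ^ (2 * n)
         \<and> cubic_char xi delta ((1 + a) / (xi ^ 2 + a)) \<noteq> delta ^ (2 * n)
         \<and> cubic_char xi delta ((xi ^ 2 + a) / (xi + a)) \<noteq> delta ^ (2 * n)"
proof -
  define m where "m = (card (UNIV::'a set) - 1) div 3"
  define G where "G = (\<lambda>u::'a. u ^ n * (u + a) ^ m)"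
  define B where "B \<longleftrightarrow> a \<notin> {- 1, - xi, - (xi ^ 2)}"
  have md: "m * 3 = card (UNIV::'a set) - 1" unfolding m_def using q_mod by presburger
  have distinct: "xi ^ 2 \<noteq> 1" "xi ^ 2 \<noteq> xi"
    using cube_root_of_unity_power_eq_iff[OF xi, of 2 0] cube_root_of_unity_power_eq_iff[OF xi, of 2 1]
    by simp_all
  have xi_mult: "xi * 1 = xi" "xi * xi ^ 2 = 1" "xi * xi = xi ^ 2"
    using xi(1) by (simp_all add: power2_eq_square power3_eq_cube mult.assoc)
  have "xi \<noteq> 0" using xi(1) by auto
  have char_iff: "cubic_char xi delta ((xi * u + a) / (u + a)) = delta ^ (2 * n)
                    \<longleftrightarrow> G (xi * u) = G u" if B "u \<in> {1, xi, xi ^ 2}" for u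
    using that xi_mult \<open>xi \<noteq> 0\<close> unfolding B_def G_def m_def
    by (intro cubic_char_ratio_eq_iff[OF q_mod xi delta]) (auto simp: add_eq_0_iff)
  have nonvanishing_iff: "(\<forall>u \<in> {1, xi, xi ^ 2}. u + a \<noteq> 0) \<longleftrightarrow> B"
    unfolding B_def by (simp add: add_eq_0_iff)
  have inj_on_iff: "inj_on G {1, xi, xi ^ 2} \<longleftrightarrow> G xi \<noteq> G 1 \<and> G 1 \<noteq> G (xi ^ 2) \<and> G (xi ^ 2) \<noteq> G xi"
    using distinct xi(2) by (auto simp: inj_on_def)
  have "poly (monom 1 n * (monom 1 m + [:a:])) = (\<lambda>x. x ^ n * (x ^ m + a))"
    by (simp add: poly_monom fun_eq_iff)
  then have "permutation_polynomial (monom 1 n * (monom 1 m + [:a:]))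
               \<longleftrightarrow> inj (\<lambda>x. x ^ n * (x ^ m + a))"
    by (simp add: permutation_polynomial_iff_inj)
  also have "\<dots> \<longleftrightarrow> gcd n m = 1 \<and> (\<forall>u \<in> {1, xi, xi ^ 2}. u + a \<noteq> 0) \<and> inj_on G {1, xi, xi ^ 2}"
    unfolding cube_roots_of_unity_eq[OF xi, symmetric] G_def
    using inj_power_mult_iff[OF md n_pos, of "\<lambda>u. u + a"] by simp
  also have "\<dots> \<longleftrightarrow> gcd n m = 1 \<and> B \<and> G xi \<noteq> G 1 \<and> G 1 \<noteq> G (xi ^ 2) \<and> G (xi ^ 2) \<noteq> G xi"
    using nonvanishing_iff inj_on_iff by simp
  also have "\<dots> \<longleftrightarrow> gcd n m = 1 \<and> B
         \<and> cubic_char xi delta ((xi + a) / (1 + a)) \<noteq> delta ^ (2 * n)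
         \<and> cubic_char xi delta ((1 + a) / (xi ^ 2 + a)) \<noteq> delta ^ (2 * n)
         \<and> cubic_char xi delta ((xi ^ 2 + a) / (xi + a)) \<noteq> delta ^ (2 * n)"
    using char_iff[of 1] char_iff[of "xi ^ 2"] char_iff[of xi] unfolding xi_mult(1-3) by blast
  finally show ?thesis unfolding m_def B_def .
qed

end
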